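(* Let $G$ be a unimodular locally compact group and let $\nu$ be a measure on $G$. Then: (a) $\nu$ is upper translation bounded if and only if $\mathrm{L}_\nu^+$ is finite; (b) $\nu$ is lower translation bounded if and only if $\mathrm{L}_\nu^-$ is positive; (c) $\nu$ is a Delone measure if and only if $\mathrm{L}_\nu^-$ is positive and $\mathrm{L}_\nu^+$ is finite.
   Context: A measure is a positive Borel measure. $\nu$ is upper translation bounded if there exist $C_u<\infty$ and a compact symmetric unit neighborhood $B_u$ with $\sup_{x\in G}\nu(B_ux)\le C_u$; lower translation bounded if there exist $C_l>0$ and a compact symmetric unit neighborhood $B_l$ with $\inf_{x\in G}\nu(B_lx)\ge C_l$; a Delone measure if both. With a Haar measure $m$, $\mathcal K$ the nonempty compact subsets and $\mathcal K_p$ those of positive Haar measure: $\mathrm{L}_\nu^-=\sup_{K\in \mathcal K}\inf_{A\in \mathcal K_p} \nu(KA)/m(A)$, $\mathrm{L}_\nu^+=\inf_{K\in \mathcal K}\sup_{A\in \mathcal K_p} \nu(A)/m(KA)$. *)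

theory Defs
  imports "HOL-Analysis.Analysis"
begin

text \<open>The group G is a type of class topological_group_add (group operation written
  additively, NOT assumed commutative), Hausdorff, and locally compact.
  Product of sets K A = {k + a}.\<close>

definition setprod :: "'a::plus set \<Rightarrow> 'a set \<Rightarrow> 'a set" where
  "setprod K A = {k + a | k a. k \<in> K \<and> a \<in> A}"

definition haar_measure :: "'a::topological_group_add measure \<Rightarrow> bool" where
  "haar_measure m \<longleftrightarrow>
     sets m = sets borel \<and>
     (\<forall>x. \<forall>A\<in>sets borel. emeasure m ((\<lambda>a. x + a) ` A) = emeasure m A) \<and>
     (\<forall>K. compact K \<longrightarrow> emeasure m K < \<infinity>) \<and>
     (\<forall>U. open U \<and> U \<noteq> {} \<longrightarrow> emeasure m U > 0) \<and>
     (\<forall>A\<in>sets borel. emeasure m A = (INF U\<in>{U. open U \<and> A \<subseteq> U}. emeasure m U)) \<and>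
     (\<forall>U. open U \<longrightarrow> emeasure m U = (SUP K\<in>{K. compact K \<and> K \<subseteq> U}. emeasure m K))"

definition unimodular :: "'a::topological_group_add measure \<Rightarrow> bool" where
  "unimodular m \<longleftrightarrow>
     (\<forall>x. \<forall>A\<in>sets borel. emeasure m ((\<lambda>a. a + x) ` A) = emeasure m A)"

definition sym_unit_nbhd :: "'a::topological_group_add set \<Rightarrow> bool" where
  "sym_unit_nbhd B \<longleftrightarrow> compact B \<and> uminus ` B = B \<and> 0 \<in> interior B"

definition upper_translation_bounded :: "'a::topological_group_add measure \<Rightarrow> bool" where
  "upper_translation_bounded \<nu> \<longleftrightarrow>
     (\<exists>C B. C < \<infinity> \<and> sym_unit_nbhd B \<and>
        (SUP x. emeasure \<nu> ((\<lambda>b. b + x) ` B)) \<le> C)"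

definition lower_translation_bounded :: "'a::topological_group_add measure \<Rightarrow> bool" where
  "lower_translation_bounded \<nu> \<longleftrightarrow>
     (\<exists>C B. C > 0 \<and> sym_unit_nbhd B \<and>
        (INF x. emeasure \<nu> ((\<lambda>b. b + x) ` B)) \<ge> C)"

definition delone_measure :: "'a::topological_group_add measure \<Rightarrow> bool" where
  "delone_measure \<nu> \<longleftrightarrow> upper_translation_bounded \<nu> \<and> lower_translation_bounded \<nu>"

definition cpt_sets :: "'a::topological_space set set" where
  "cpt_sets = {K. compact K \<and> K \<noteq> {}}"

definition cpt_pos_sets :: "'a::topological_space measure \<Rightarrow> 'a set set" where
  "cpt_pos_sets m = {A. compact A \<and> emeasure m A > 0}"

definition L_minus :: "'a::topological_group_add measure \<Rightarrow> 'a measure \<Rightarrow> ennreal" where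
  "L_minus m \<nu> = (SUP K\<in>cpt_sets. INF A\<in>cpt_pos_sets m.
       emeasure \<nu> (setprod K A) / emeasure m A)"

definition L_plus :: "'a::topological_group_add measure \<Rightarrow> 'a measure \<Rightarrow> ennreal" where
  "L_plus m \<nu> = (INF K\<in>cpt_sets. SUP A\<in>cpt_pos_sets m.
       emeasure \<nu> A / emeasure m (setprod K A))"

end

theory Submission
  imports Defs
begin

text \<open>Both directions compare \<open>\<nu>(A)\<close> with \<open>m(KA)\<close>. A bound on \<open>\<nu>(Bx)\<close>, uniform in \<open>x\<close>, is
  transported to an arbitrary compact \<open>A\<close> by packing: a maximal family of pairwise disjoint right
  translates \<open>Wx\<close>, \<open>x \<in> A\<close>, has at most \<open>m(WA)/m(W)\<close> members, while by maximality the translates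
  \<open>W\<^sup>-\<^sup>1Wx\<close> cover \<open>A\<close>. Conversely, testing \<open>L\<^sub>\<nu>\<^sup>\<plusminus>\<close> on \<open>A = Bx\<close> bounds \<open>\<nu>(Bx)\<close>, because
  unimodularity gives \<open>m(KBx) = m(KB)\<close>.\<close>

lemma ennreal_divide_mult_cancel:
  fixes a b :: ennreal
  assumes "0 < b" "b < \<infinity>"
  shows "a / b * b = a"
  using assms by (simp add: ennreal_divide_times)

lemma ennreal_le_mult_of_divide_le:
  fixes a b c :: ennreal
  assumes "a / b \<le> c" "0 < b" "b < \<infinity>"
  shows "a \<le> c * b"
  by (metis assms ennreal_divide_mult_cancel mult_right_mono zero_le)

lemma ennreal_mult_le_of_le_divide:
  fixes a b c :: ennreal
  assumes "c \<le> a / b" "0 < b" "b < \<infinity>"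
  shows "c * b \<le> a"
  by (metis assms ennreal_divide_mult_cancel mult_right_mono zero_le)

lemma ennreal_divide_less_top:
  fixes a b :: ennreal
  shows "a < \<infinity> \<Longrightarrow> 0 < b \<Longrightarrow> a / b < \<infinity>"
  by (simp add: less_top[symmetric] ennreal_divide_eq_top_iff zero_less_iff_neq_zero)

lemma ennreal_divide_le_divide_cross:
  fixes a b c d :: ennreal
  assumes "a * d \<le> c * b" "0 < b" "0 < d" "d < \<infinity>"
  shows "a / b \<le> c / d"
proof (rule divide_le_posI_ennreal)
  show "0 < b" by fact
  have "a = a * d / d" using assms(3,4) by (simp add: mult_divide_eq_ennreal)
  also have "\<dots> \<le> c * b / d" using assms(1) by (rule divide_right_mono_ennreal)
  also have "\<dots> = b * (c / d)" by (simp add: ennreal_times_divide mult.commute)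
  finally show "a \<le> b * (c / d)" .
qed

lemma image_translation_right_eq_vimage:
  fixes S :: "'a::group_add set"
  shows "(\<lambda>b. b + x) ` S = (\<lambda>y. y + - x) -` S"
  by (auto simp: image_iff add.assoc) (metis diff_add_cancel)

lemma open_translation_right:
  fixes S :: "'a::topological_group_add set"
  shows "open S \<Longrightarrow> open ((\<lambda>b. b + x) ` S)"
  unfolding image_translation_right_eq_vimage by (intro open_vimage continuous_intros)

lemma sets_translation_right:
  fixes S :: "'a::topological_group_add set"
  assumes "S \<in> sets borel"
  shows "(\<lambda>b. b + x) ` S \<in> sets borel"
proof -
  have "(\<lambda>y. y + - x) \<in> borel_measurable borel"
    by (intro borel_measurable_continuous_onI continuous_intros)
  from measurable_sets[OF this assms] show ?thesis
    by (simp add: image_translation_right_eq_vimage)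
qed

lemma compact_translation_right:
  fixes S :: "'a::topological_group_add set"
  shows "compact S \<Longrightarrow> compact ((\<lambda>b. b + x) ` S)"
  by (intro compact_continuous_image continuous_intros)

lemma compact_setprod:
  fixes K A :: "'a::topological_group_add set"
  assumes "compact K" "compact A"
  shows "compact (setprod K A)"
proof -
  have "setprod K A = (\<lambda>p. fst p + snd p) ` (K \<times> A)"
    unfolding setprod_def by force
  moreover have "continuous_on (K \<times> A) (\<lambda>p. fst p + snd p)"
    by (intro continuous_intros)
  ultimately show ?thesis
    using assms by (simp add: compact_Times compact_continuous_image)
qed

lemma open_setprod:
  fixes W :: "'a::topological_group_add set"
  assumes "open W"
  shows "open (setprod W A)"
proof -
  have "setprod W A = (\<Union>a\<in>A. (\<lambda>b. b + a) ` W)"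
    unfolding setprod_def by auto
  then show ?thesis
    using open_translation_right[OF assms] by auto
qed

lemma setprod_mono: "K \<subseteq> K' \<Longrightarrow> A \<subseteq> A' \<Longrightarrow> setprod K A \<subseteq> setprod K' A'"
  unfolding setprod_def by blast

lemma subset_setprod_zero: "(0::'a::monoid_add) \<in> K \<Longrightarrow> A \<subseteq> setprod K A"
  unfolding setprod_def by force

lemma subset_if_setprod_uminus_subset:
  fixes U :: "'a::group_add set"
  assumes "0 \<in> U" "setprod (uminus ` U) U \<subseteq> S"
  shows "U \<subseteq> S"
proof -
  have "0 \<in> uminus ` U"
    using assms(1) by (metis image_eqI minus_zero)
  then show ?thesis
    using assms(2) subset_setprod_zero by blast
qed

lemma setprod_translation_right:
  fixes K A :: "'a::semigroup_add set"
  shows "setprod K ((\<lambda>b. b + x) ` A) = (\<lambda>b. b + x) ` setprod K A"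
  unfolding setprod_def by (force simp: add.assoc)

lemma translates_meet_imp_mem_setprod:
  fixes W :: "'a::group_add set"
  assumes "(\<lambda>b. b + a) ` W \<inter> (\<lambda>b. b + x) ` W \<noteq> {}"
  shows "a \<in> (\<lambda>b. b + x) ` setprod (uminus ` W) W"
proof -
  obtain u v where "u \<in> W" "v \<in> W" "u + a = v + x"
    using assms by blast
  then have "a = (- u + v) + x"
    by (metis add.assoc minus_add_cancel)
  moreover have "- u + v \<in> setprod (uminus ` W) W"
    using \<open>u \<in> W\<close> \<open>v \<in> W\<close> unfolding setprod_def by blast
  ultimately show ?thesis by blast
qed

lemma zero_nhd_setprod_subset:
  fixes S :: "'a::topological_group_add set"
  assumes "open S" "0 \<in> S"
  obtains U where "open U" "0 \<in> U" "setprod (uminus ` U) U \<subseteq> S"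
proof -
  have "open ((\<lambda>p. - fst p + snd p) -` S)"
    by (rule open_vimage[OF assms(1)]) (intro continuous_intros)
  moreover have "(0, 0) \<in> (\<lambda>p. - fst p + snd p) -` S"
    using assms(2) by simp
  ultimately obtain P Q where PQ: "open P" "open Q" "(0, 0) \<in> P \<times> Q"
      "P \<times> Q \<subseteq> (\<lambda>p. - fst p + snd p) -` S"
    by (rule open_prod_elim)
  show thesis
  proof
    show "open (P \<inter> Q)" "0 \<in> P \<inter> Q"
      using PQ by auto
    show "setprod (uminus ` (P \<inter> Q)) (P \<inter> Q) \<subseteq> S"
      using PQ(4) unfolding setprod_def by force
  qed
qed

lemma sym_unit_nbhd_symmetrize:
  fixes S :: "'a::topological_group_add set"
  assumes "compact S" "0 \<in> interior S"
  shows "sym_unit_nbhd (S \<union> uminus ` S)"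
  unfolding sym_unit_nbhd_def
proof (intro conjI)
  show "compact (S \<union> uminus ` S)"
    using assms(1) by (intro compact_Un compact_continuous_image continuous_intros)
  show "uminus ` (S \<union> uminus ` S) = S \<union> uminus ` S"
    by (auto simp: image_Un image_image)
  show "0 \<in> interior (S \<union> uminus ` S)"
    using assms(2) interior_mono[of S] by blast
qed

lemma ex_sym_unit_nbhd_superset:
  fixes K V :: "'a::topological_group_add set"
  assumes "compact K" "sym_unit_nbhd V"
  obtains B where "sym_unit_nbhd B" "setprod K V \<subseteq> B"
proof -
  define S where "S = setprod K V \<union> V"
  have "compact V" "0 \<in> interior V"
    using assms(2) by (simp_all add: sym_unit_nbhd_def)
  have "compact S"
    unfolding S_def using assms(1) \<open>compact V\<close> by (intro compact_Un compact_setprod)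
  moreover have "0 \<in> interior S"
    unfolding S_def using \<open>0 \<in> interior V\<close> interior_mono[of V] by blast
  ultimately have "sym_unit_nbhd (S \<union> uminus ` S)"
    by (rule sym_unit_nbhd_symmetrize)
  moreover have "setprod K V \<subseteq> S \<union> uminus ` S"
    unfolding S_def by blast
  ultimately show thesis
    by (rule that)
qed

lemma zero_mem_sym_unit_nbhd: "sym_unit_nbhd B \<Longrightarrow> 0 \<in> B"
  unfolding sym_unit_nbhd_def using interior_subset by blast

lemma ex_sym_unit_nbhd:
  assumes "locally_compact_space (euclidean :: 'a topology)"
  obtains B :: "'a::topological_group_add set" where "sym_unit_nbhd B"
proof -
  have "\<exists>U K. openin euclidean U \<and> compactin euclidean K \<and> (0::'a) \<in> U \<and> U \<subseteq> K"
    using assms unfolding locally_compact_space_def by simp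
  then obtain U K where "openin euclidean U" "compactin euclidean K" "(0::'a) \<in> U" "U \<subseteq> K"
    by blast
  then have "open U" "compact K" "0 \<in> U" "U \<subseteq> K"
    by (simp_all add: compactin_euclidean_iff)
  then have "0 \<in> interior K"
    using interior_maximal by blast
  with \<open>compact K\<close> show thesis
    by (rule that[OF sym_unit_nbhd_symmetrize])
qed

lemma emeasure_UN_le_card_mult:
  assumes "finite F" "T ` F \<subseteq> sets M" "\<And>x. x \<in> F \<Longrightarrow> emeasure M (T x) \<le> C"
  shows "emeasure M (\<Union>x\<in>F. T x) \<le> of_nat (card F) * C"
proof -
  have "emeasure M (\<Union>x\<in>F. T x) \<le> (\<Sum>x\<in>F. emeasure M (T x))"
    using assms(1,2) by (rule emeasure_subadditive_finite)
  also have "\<dots> \<le> (\<Sum>x\<in>F. C)"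
    using assms(3) by (rule sum_mono)
  finally show ?thesis by simp
qed

lemma card_mult_le_emeasure_UN:
  assumes "finite F" "T ` F \<subseteq> sets M" "disjoint_family_on T F"
    and "\<And>x. x \<in> F \<Longrightarrow> C \<le> emeasure M (T x)"
  shows "of_nat (card F) * C \<le> emeasure M (\<Union>x\<in>F. T x)"
proof -
  have "of_nat (card F) * C = (\<Sum>x\<in>F. C)" by simp
  also have "\<dots> \<le> (\<Sum>x\<in>F. emeasure M (T x))"
    using assms(4) by (rule sum_mono)
  also have "\<dots> = emeasure M (\<Union>x\<in>F. T x)"
    using assms(1-3) by (intro sum_emeasure)
  finally show ?thesis .
qed

locale unimodular_haar =
  fixes m :: "'a::{topological_group_add, t2_space} measure"
  assumes haar: "haar_measure m" and unimodular: "unimodular m"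
begin

lemma sets_eq: "sets m = sets borel"
  using haar by (simp add: haar_measure_def)

lemma sets_compact: "compact K \<Longrightarrow> K \<in> sets m"
  unfolding sets_eq by (rule borel_compact)

lemma emeasure_translation_left:
  "A \<in> sets borel \<Longrightarrow> emeasure m ((\<lambda>a. x + a) ` A) = emeasure m A"
  using haar by (simp add: haar_measure_def)

lemma emeasure_translation_right:
  "A \<in> sets borel \<Longrightarrow> emeasure m ((\<lambda>a. a + x) ` A) = emeasure m A"
  using unimodular by (simp add: unimodular_def)

lemma emeasure_compact_finite: "compact K \<Longrightarrow> emeasure m K < \<infinity>"
  using haar by (simp add: haar_measure_def)

lemma emeasure_open_pos: "open U \<Longrightarrow> U \<noteq> {} \<Longrightarrow> 0 < emeasure m U"
  using haar unfolding haar_measure_def by blast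

lemma emeasure_pos_of_interior:
  assumes "A \<in> sets borel" "interior A \<noteq> {}"
  shows "0 < emeasure m A"
proof -
  have "0 < emeasure m (interior A)"
    using assms(2) by (intro emeasure_open_pos) simp_all
  also have "\<dots> \<le> emeasure m A"
    using assms(1) by (intro emeasure_mono interior_subset) (simp add: sets_eq)
  finally show ?thesis .
qed

lemma emeasure_sym_unit_nbhd_pos: "sym_unit_nbhd B \<Longrightarrow> 0 < emeasure m B"
  unfolding sym_unit_nbhd_def by (intro emeasure_pos_of_interior borel_compact) auto

lemma emeasure_subset_compact_finite:
  assumes "A \<subseteq> K" "compact K" "A \<in> sets borel"
  shows "emeasure m A < \<infinity>"
proof -
  have "emeasure m A \<le> emeasure m K"
    using assms by (intro emeasure_mono sets_compact)
  then show ?thesis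
    using emeasure_compact_finite[OF assms(2)] by simp
qed

lemma emeasure_open_subset_compact:
  assumes "open U" "x \<in> U" "U \<subseteq> K" "compact K"
  shows "0 < emeasure m U" "emeasure m U < \<infinity>"
proof -
  show "0 < emeasure m U"
    using assms(1,2) by (blast intro: emeasure_open_pos)
  show "emeasure m U < \<infinity>"
    using assms(3,4) borel_open[OF assms(1)] by (rule emeasure_subset_compact_finite)
qed

lemma emeasure_le_emeasure_setprod:
  assumes "k \<in> K" "compact K" "compact A"
  shows "emeasure m A \<le> emeasure m (setprod K A)"
proof -
  have "emeasure m A = emeasure m ((\<lambda>a. k + a) ` A)"
    using assms(3) by (simp add: emeasure_translation_left borel_compact)
  also have "\<dots> \<le> emeasure m (setprod K A)"
    using assms by (intro emeasure_mono sets_compact compact_setprod) (auto simp: setprod_def)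
  finally show ?thesis .
qed

lemma card_disjoint_translates_le:
  assumes "W \<in> sets borel" "setprod W A \<in> sets borel"
    and "finite F" "F \<subseteq> A" "disjoint_family_on (\<lambda>x. (\<lambda>b. b + x) ` W) F"
  shows "of_nat (card F) * emeasure m W \<le> emeasure m (setprod W A)"
proof -
  have translates: "(\<lambda>x. (\<lambda>b. b + x) ` W) ` F \<subseteq> sets m"
    using assms(1) by (auto simp: sets_eq sets_translation_right)
  have "of_nat (card F) * emeasure m W \<le> emeasure m (\<Union>x\<in>F. (\<lambda>b. b + x) ` W)"
    using assms(1,3,5) translates
    by (intro card_mult_le_emeasure_UN) (simp_all add: emeasure_translation_right)
  also have "\<dots> \<le> emeasure m (setprod W A)"
    using assms(2,4) by (intro emeasure_mono) (auto simp: setprod_def sets_eq)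
  finally show ?thesis .
qed

lemma card_disjoint_translates_bounded:
  assumes W: "W \<in> sets borel" "0 < emeasure m W" "emeasure m W < \<infinity>"
    and WA: "setprod W A \<in> sets borel" "emeasure m (setprod W A) < \<infinity>"
  obtains N where "\<And>F. finite F \<Longrightarrow> F \<subseteq> A \<Longrightarrow> disjoint_family_on (\<lambda>x. (\<lambda>b. b + x) ` W) F
    \<Longrightarrow> card F < N"
proof -
  have "emeasure m (setprod W A) / emeasure m W < \<infinity>"
    using WA(2) W(2) by (rule ennreal_divide_less_top)
  then obtain N where N: "emeasure m (setprod W A) / emeasure m W < of_nat N"
    using ennreal_Ex_less_of_nat by auto
  have "card F < N"
    if "finite F" "F \<subseteq> A" "disjoint_family_on (\<lambda>x. (\<lambda>b. b + x) ` W) F" for F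
  proof -
    have "of_nat (card F) = of_nat (card F) * emeasure m W / emeasure m W"
      using W(2,3) by (simp add: mult_divide_eq_ennreal)
    also have "\<dots> \<le> emeasure m (setprod W A) / emeasure m W"
      using W(1) WA(1) that by (intro divide_right_mono_ennreal card_disjoint_translates_le)
    also have "\<dots> < of_nat N"
      by (rule N)
    finally show ?thesis by simp
  qed
  then show thesis
    by (rule that)
qed

lemma maximal_disjoint_translates_cover:
  assumes W: "W \<in> sets borel" "0 < emeasure m W" "emeasure m W < \<infinity>"
    and WA: "setprod W A \<in> sets borel" "emeasure m (setprod W A) < \<infinity>"
  obtains F where "finite F" "F \<subseteq> A" "disjoint_family_on (\<lambda>x. (\<lambda>b. b + x) ` W) F"
    "A \<subseteq> (\<Union>x\<in>F. (\<lambda>b. b + x) ` setprod (uminus ` W) W)"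
proof -
  define T where "T x = (\<lambda>b. b + x) ` W" for x
  define P where "P F \<longleftrightarrow> finite F \<and> F \<subseteq> A \<and> disjoint_family_on T F" for F
  obtain N where "\<And>F. P F \<Longrightarrow> card F < N"
    using card_disjoint_translates_bounded[OF W WA] unfolding P_def T_def by metis
  moreover have "P {}"
    by (simp add: P_def disjoint_family_on_def)
  ultimately have "\<exists>F. P F \<and> (\<forall>G. P G \<longrightarrow> card G \<le> card F)"
    by (intro Lattices_Big.ex_has_greatest_nat[of P "{}"]) auto
  then obtain F where F: "P F" and maximal: "\<And>G. P G \<Longrightarrow> card G \<le> card F"
    by blast
  have meets: "\<exists>x\<in>F. T a \<inter> T x \<noteq> {}" if "a \<in> A" for a
  proof (rule ccontr)
    assume "\<not> ?thesis"
    then have disjoint: "T a \<inter> (\<Union>x\<in>F. T x) = {}" by blast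
    have "W \<noteq> {}"
      using W(2) by (metis emeasure_empty less_irrefl)
    with disjoint have "a \<notin> F"
      unfolding T_def by blast
    with F disjoint \<open>a \<in> A\<close> have "P (insert a F)"
      by (simp add: P_def disjoint_family_on_insert)
    then have "card (insert a F) \<le> card F" by (rule maximal)
    with \<open>a \<notin> F\<close> F show False by (simp add: P_def)
  qed
  have "A \<subseteq> (\<Union>x\<in>F. (\<lambda>b. b + x) ` setprod (uminus ` W) W)"
  proof
    fix a assume "a \<in> A"
    then obtain x where "x \<in> F" "T a \<inter> T x \<noteq> {}"
      using meets by blast
    then show "a \<in> (\<Union>x\<in>F. (\<lambda>b. b + x) ` setprod (uminus ` W) W)"
      using translates_meet_imp_mem_setprod[of a W x] unfolding T_def by blast
  qed
  with F show thesis
    unfolding P_def T_def by (intro that) simp_all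
qed

lemma emeasure_mult_le_setprod_of_translates_le:
  assumes \<nu>: "sets \<nu> = sets borel"
    and bounded: "\<And>x. emeasure \<nu> ((\<lambda>b. b + x) ` B) \<le> C"
    and B: "compact B" and U: "open U" "0 \<in> U" "setprod (uminus ` U) U \<subseteq> B"
    and A: "compact A"
  shows "emeasure \<nu> A * emeasure m U \<le> C * emeasure m (setprod B A)"
proof -
  have "U \<subseteq> B"
    using U(2,3) by (rule subset_if_setprod_uminus_subset)
  have BA: "compact (setprod B A)"
    using B A by (rule compact_setprod)
  have mU: "0 < emeasure m U" "emeasure m U < \<infinity>"
    using U(1,2) \<open>U \<subseteq> B\<close> B by (rule emeasure_open_subset_compact)+
  have UA: "setprod U A \<subseteq> setprod B A"
    using \<open>U \<subseteq> B\<close> by (rule setprod_mono) simp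
  then have "emeasure m (setprod U A) < \<infinity>"
    using BA U(1) by (intro emeasure_subset_compact_finite borel_open open_setprod)
  then obtain F where F: "finite F" "F \<subseteq> A" "disjoint_family_on (\<lambda>x. (\<lambda>b. b + x) ` U) F"
      "A \<subseteq> (\<Union>x\<in>F. (\<lambda>b. b + x) ` setprod (uminus ` U) U)"
    using maximal_disjoint_translates_cover[OF borel_open[OF U(1)] mU
        borel_open[OF open_setprod[OF U(1)]]]
    by blast
  have translates: "(\<lambda>x. (\<lambda>b. b + x) ` B) ` F \<subseteq> sets \<nu>"
    using B by (auto simp: \<nu> borel_compact compact_translation_right)
  have "emeasure \<nu> A \<le> emeasure \<nu> (\<Union>x\<in>F. (\<lambda>b. b + x) ` B)"
    using F(1,4) U(3) translates by (intro emeasure_mono) blast+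
  also have "\<dots> \<le> of_nat (card F) * C"
    using F(1) translates bounded by (rule emeasure_UN_le_card_mult)
  finally have "emeasure \<nu> A * emeasure m U \<le> of_nat (card F) * C * emeasure m U"
    by (rule mult_right_mono) simp
  also have "\<dots> = C * (of_nat (card F) * emeasure m U)"
    by (simp add: ac_simps)
  also have "\<dots> \<le> C * emeasure m (setprod U A)"
    using F U(1) by (intro mult_left_mono card_disjoint_translates_le) (simp_all add: open_setprod)
  also have "\<dots> \<le> C * emeasure m (setprod B A)"
    using UA BA by (intro mult_left_mono emeasure_mono sets_compact) simp_all
  finally show ?thesis .
qed

lemma mult_emeasure_le_setprod_of_translates_ge:
  assumes \<nu>: "sets \<nu> = sets borel"
    and bounded: "\<And>x. C \<le> emeasure \<nu> ((\<lambda>b. b + x) ` B)"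
    and B: "sym_unit_nbhd B" and A: "compact A"
  shows "C * emeasure m A \<le> emeasure \<nu> (setprod B A) * emeasure m (setprod B B)"
proof -
  have "compact B" "uminus ` B = B" "0 \<in> interior B"
    using B by (simp_all add: sym_unit_nbhd_def)
  then have BB: "compact (setprod B B)" and BA: "compact (setprod B A)"
    using A by (simp_all add: compact_setprod)
  have "0 < emeasure m B"
    using B by (rule emeasure_sym_unit_nbhd_pos)
  then obtain F where F: "finite F" "F \<subseteq> A" "disjoint_family_on (\<lambda>x. (\<lambda>b. b + x) ` B) F"
      "A \<subseteq> (\<Union>x\<in>F. (\<lambda>b. b + x) ` setprod B B)"
    using maximal_disjoint_translates_cover[OF borel_compact[OF \<open>compact B\<close>] \<open>0 < emeasure m B\<close>
        emeasure_compact_finite[OF \<open>compact B\<close>] borel_compact[OF BA] emeasure_compact_finite[OF BA]]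
    unfolding \<open>uminus ` B = B\<close> by blast
  have translates_BB: "(\<lambda>x. (\<lambda>b. b + x) ` setprod B B) ` F \<subseteq> sets m"
    using BB by (auto intro: sets_compact compact_translation_right)
  have translates_B: "(\<lambda>x. (\<lambda>b. b + x) ` B) ` F \<subseteq> sets \<nu>"
    using \<open>compact B\<close> by (auto simp: \<nu> borel_compact compact_translation_right)
  have "emeasure m A \<le> emeasure m (\<Union>x\<in>F. (\<lambda>b. b + x) ` setprod B B)"
    using F(1,4) translates_BB by (intro emeasure_mono) blast+
  also have "\<dots> \<le> of_nat (card F) * emeasure m (setprod B B)"
    using F(1) translates_BB
    by (rule emeasure_UN_le_card_mult) (simp add: BB borel_compact emeasure_translation_right)
  finally have "C * emeasure m A \<le> C * (of_nat (card F) * emeasure m (setprod B B))"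
    by (rule mult_left_mono) simp
  also have "\<dots> = of_nat (card F) * C * emeasure m (setprod B B)"
    by (simp add: ac_simps)
  also have "\<dots> \<le> emeasure \<nu> (\<Union>x\<in>F. (\<lambda>b. b + x) ` B) * emeasure m (setprod B B)"
    using F(1,3) translates_B bounded by (intro mult_right_mono card_mult_le_emeasure_UN) simp_all
  also have "\<dots> \<le> emeasure \<nu> (setprod B A) * emeasure m (setprod B B)"
    using F(2) BA by (intro mult_right_mono emeasure_mono) (auto simp: \<nu> borel_compact setprod_def)
  finally show ?thesis .
qed

lemma L_plus_finite_if_upper_translation_bounded:
  assumes \<nu>: "sets \<nu> = sets borel" and "upper_translation_bounded \<nu>"
  shows "L_plus m \<nu> < \<infinity>"
proof -
  obtain C B where C: "C < \<infinity>" and B: "sym_unit_nbhd B"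
    and bounded: "\<And>x. emeasure \<nu> ((\<lambda>b. b + x) ` B) \<le> C"
    using assms(2) unfolding upper_translation_bounded_def by (meson SUP_le_iff UNIV_I)
  then have "compact B" "0 \<in> interior B"
    by (simp_all add: sym_unit_nbhd_def)
  obtain U where U: "open U" "0 \<in> U" "setprod (uminus ` U) U \<subseteq> interior B"
    using zero_nhd_setprod_subset[OF open_interior \<open>0 \<in> interior B\<close>] by blast
  then have U_sub: "setprod (uminus ` U) U \<subseteq> B"
    using interior_subset by blast
  have mU: "0 < emeasure m U" "emeasure m U < \<infinity>"
    using U(1,2) subset_if_setprod_uminus_subset[OF U(2) U_sub] \<open>compact B\<close>
    by (rule emeasure_open_subset_compact)+
  have "emeasure \<nu> A / emeasure m (setprod B A) \<le> C / emeasure m U"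
    if "A \<in> cpt_pos_sets m" for A
  proof (rule ennreal_divide_le_divide_cross)
    have A: "compact A" "0 < emeasure m A"
      using that by (simp_all add: cpt_pos_sets_def)
    show "emeasure \<nu> A * emeasure m U \<le> C * emeasure m (setprod B A)"
      using \<nu> bounded \<open>compact B\<close> U(1,2) U_sub A(1) by (rule emeasure_mult_le_setprod_of_translates_le)
    have "emeasure m A \<le> emeasure m (setprod B A)"
      using zero_mem_sym_unit_nbhd[OF B] \<open>compact B\<close> A(1) by (rule emeasure_le_emeasure_setprod)
    with A show "0 < emeasure m (setprod B A)" by simp
  qed (use mU in simp_all)
  then have "(SUP A\<in>cpt_pos_sets m. emeasure \<nu> A / emeasure m (setprod B A)) \<le> C / emeasure m U"
    by (rule SUP_least)
  moreover have "B \<in> cpt_sets"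
    using \<open>compact B\<close> \<open>0 \<in> interior B\<close> by (auto simp: cpt_sets_def)
  ultimately have "L_plus m \<nu> \<le> C / emeasure m U"
    unfolding L_plus_def by (blast intro: INF_lower2)
  also have "\<dots> < \<infinity>"
    using C mU(1) by (rule ennreal_divide_less_top)
  finally show ?thesis .
qed

lemma upper_translation_bounded_if_L_plus_finite:
  assumes lc: "locally_compact_space (euclidean :: 'a topology)" and "L_plus m \<nu> < \<infinity>"
  shows "upper_translation_bounded \<nu>"
proof -
  obtain K where K: "K \<in> cpt_sets"
    and c: "(SUP A\<in>cpt_pos_sets m. emeasure \<nu> A / emeasure m (setprod K A)) < \<infinity>"
    using assms(2) unfolding L_plus_def by (auto simp: INF_less_iff)
  define c where "c = (SUP A\<in>cpt_pos_sets m. emeasure \<nu> A / emeasure m (setprod K A))"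
  obtain B :: "'a set" where B: "sym_unit_nbhd B"
    using ex_sym_unit_nbhd[OF lc] by blast
  have "compact K" "K \<noteq> {}" "compact B"
    using K B by (simp_all add: cpt_sets_def sym_unit_nbhd_def)
  then have KB: "compact (setprod K B)"
    by (simp add: compact_setprod)
  obtain k where "k \<in> K"
    using \<open>K \<noteq> {}\<close> by blast
  then have "emeasure m B \<le> emeasure m (setprod K B)"
    using \<open>compact K\<close> \<open>compact B\<close> by (rule emeasure_le_emeasure_setprod)
  then have mKB: "0 < emeasure m (setprod K B)" "emeasure m (setprod K B) < \<infinity>"
    using emeasure_sym_unit_nbhd_pos[OF B] emeasure_compact_finite[OF KB] by simp_all
  have "emeasure \<nu> ((\<lambda>b. b + x) ` B) \<le> c * emeasure m (setprod K B)" for x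
  proof -
    have "(\<lambda>b. b + x) ` B \<in> cpt_pos_sets m"
      using \<open>compact B\<close> emeasure_sym_unit_nbhd_pos[OF B]
      by (simp add: cpt_pos_sets_def compact_translation_right emeasure_translation_right
          borel_compact)
    then have "emeasure \<nu> ((\<lambda>b. b + x) ` B) / emeasure m (setprod K ((\<lambda>b. b + x) ` B)) \<le> c"
      unfolding c_def by (rule SUP_upper)
    then have "emeasure \<nu> ((\<lambda>b. b + x) ` B) / emeasure m (setprod K B) \<le> c"
      using KB by (simp add: setprod_translation_right emeasure_translation_right borel_compact)
    then show ?thesis
      using mKB by (rule ennreal_le_mult_of_divide_le)
  qed
  then have "(SUP x. emeasure \<nu> ((\<lambda>b. b + x) ` B)) \<le> c * emeasure m (setprod K B)"
    by (rule SUP_least)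
  moreover have "c * emeasure m (setprod K B) < \<infinity>"
    using c mKB(2) unfolding c_def by (simp add: ennreal_mult_less_top)
  ultimately show ?thesis
    unfolding upper_translation_bounded_def using B by blast
qed

lemma L_minus_pos_if_lower_translation_bounded:
  assumes \<nu>: "sets \<nu> = sets borel" and "lower_translation_bounded \<nu>"
  shows "0 < L_minus m \<nu>"
proof -
  obtain C B where C: "0 < C" and B: "sym_unit_nbhd B"
    and bounded: "\<And>x. C \<le> emeasure \<nu> ((\<lambda>b. b + x) ` B)"
    using assms(2) unfolding lower_translation_bounded_def by (meson le_INF_iff UNIV_I)
  have "compact B"
    using B by (simp add: sym_unit_nbhd_def)
  then have BB: "compact (setprod B B)"
    by (simp add: compact_setprod)
  have "emeasure m B \<le> emeasure m (setprod B B)"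
    using zero_mem_sym_unit_nbhd[OF B] \<open>compact B\<close> \<open>compact B\<close> by (rule emeasure_le_emeasure_setprod)
  then have mBB: "0 < emeasure m (setprod B B)" "emeasure m (setprod B B) < \<infinity>"
    using emeasure_sym_unit_nbhd_pos[OF B] emeasure_compact_finite[OF BB] by simp_all
  have "C / emeasure m (setprod B B) \<le> emeasure \<nu> (setprod B A) / emeasure m A"
    if "A \<in> cpt_pos_sets m" for A
  proof (rule ennreal_divide_le_divide_cross)
    have A: "compact A" "0 < emeasure m A"
      using that by (simp_all add: cpt_pos_sets_def)
    show "C * emeasure m A \<le> emeasure \<nu> (setprod B A) * emeasure m (setprod B B)"
      using \<nu> bounded B A(1) by (rule mult_emeasure_le_setprod_of_translates_ge)
    show "0 < emeasure m A" "emeasure m A < \<infinity>"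
      using A emeasure_compact_finite by simp_all
  qed (use mBB in simp)
  then have "C / emeasure m (setprod B B)
      \<le> (INF A\<in>cpt_pos_sets m. emeasure \<nu> (setprod B A) / emeasure m A)"
    by (rule INF_greatest)
  moreover have "B \<in> cpt_sets"
    using \<open>compact B\<close> zero_mem_sym_unit_nbhd[OF B] by (auto simp: cpt_sets_def)
  ultimately have "C / emeasure m (setprod B B) \<le> L_minus m \<nu>"
    unfolding L_minus_def by (blast intro: SUP_upper2)
  moreover have "0 < C / emeasure m (setprod B B)"
    using C mBB(2) by (simp add: ennreal_zero_less_divide)
  ultimately show ?thesis by simp
qed

lemma lower_translation_bounded_if_L_minus_pos:
  assumes lc: "locally_compact_space (euclidean :: 'a topology)"
    and \<nu>: "sets \<nu> = sets borel" and "0 < L_minus m \<nu>"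
  shows "lower_translation_bounded \<nu>"
proof -
  obtain K where K: "K \<in> cpt_sets"
    and c: "0 < (INF A\<in>cpt_pos_sets m. emeasure \<nu> (setprod K A) / emeasure m A)"
    using assms(3) unfolding L_minus_def by (auto simp: less_SUP_iff)
  define c where "c = (INF A\<in>cpt_pos_sets m. emeasure \<nu> (setprod K A) / emeasure m A)"
  obtain V :: "'a set" where V: "sym_unit_nbhd V"
    using ex_sym_unit_nbhd[OF lc] by blast
  have "compact K" "compact V"
    using K V by (simp_all add: cpt_sets_def sym_unit_nbhd_def)
  obtain B where B: "sym_unit_nbhd B" and KV: "setprod K V \<subseteq> B"
    using ex_sym_unit_nbhd_superset[OF \<open>compact K\<close> V] by blast
  have mV: "0 < emeasure m V" "emeasure m V < \<infinity>"
    using emeasure_sym_unit_nbhd_pos[OF V] emeasure_compact_finite[OF \<open>compact V\<close>] by simp_all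
  have "c * emeasure m V \<le> emeasure \<nu> ((\<lambda>b. b + x) ` B)" for x
  proof -
    have mVx: "emeasure m ((\<lambda>b. b + x) ` V) = emeasure m V"
      using \<open>compact V\<close> by (simp add: emeasure_translation_right borel_compact)
    then have "(\<lambda>b. b + x) ` V \<in> cpt_pos_sets m"
      using \<open>compact V\<close> mV by (simp add: cpt_pos_sets_def compact_translation_right)
    then have "c \<le> emeasure \<nu> (setprod K ((\<lambda>b. b + x) ` V)) / emeasure m V"
      unfolding c_def mVx[symmetric] by (rule INF_lower)
    then have "c * emeasure m V \<le> emeasure \<nu> (setprod K ((\<lambda>b. b + x) ` V))"
      using mV by (rule ennreal_mult_le_of_le_divide)
    also have "\<dots> \<le> emeasure \<nu> ((\<lambda>b. b + x) ` B)"
    proof (rule emeasure_mono)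
      show "setprod K ((\<lambda>b. b + x) ` V) \<subseteq> (\<lambda>b. b + x) ` B"
        unfolding setprod_translation_right using KV by (rule image_mono)
      show "(\<lambda>b. b + x) ` B \<in> sets \<nu>"
        using B by (simp add: \<nu> sym_unit_nbhd_def borel_compact compact_translation_right)
    qed
    finally show ?thesis .
  qed
  then have "c * emeasure m V \<le> (INF x. emeasure \<nu> ((\<lambda>b. b + x) ` B))"
    by (rule INF_greatest)
  moreover have "0 < c * emeasure m V"
    using c mV(1) unfolding c_def by (simp add: ennreal_zero_less_mult_iff)
  ultimately show ?thesis
    unfolding lower_translation_bounded_def using B by blast
qed

end

theorem lemma3p8:
  fixes m \<nu> :: "'a::{topological_group_add, t2_space} measure"
  assumes "locally_compact_space (euclidean :: 'a topology)"
    and "haar_measure m"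
    and "unimodular m"
    and "sets \<nu> = sets borel"
  shows "(upper_translation_bounded \<nu> \<longleftrightarrow> L_plus m \<nu> < \<infinity>)
    \<and> (lower_translation_bounded \<nu> \<longleftrightarrow> L_minus m \<nu> > 0)
    \<and> (delone_measure \<nu> \<longleftrightarrow> L_minus m \<nu> > 0 \<and> L_plus m \<nu> < \<infinity>)"
proof -
  interpret unimodular_haar m
    using assms(2,3) by unfold_locales
  have upper: "upper_translation_bounded \<nu> \<longleftrightarrow> L_plus m \<nu> < \<infinity>"
    using L_plus_finite_if_upper_translation_bounded upper_translation_bounded_if_L_plus_finite
      assms(1,4) by blast
  have lower: "lower_translation_bounded \<nu> \<longleftrightarrow> L_minus m \<nu> > 0"
    using L_minus_pos_if_lower_translation_bounded lower_translation_bounded_if_L_minus_pos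
      assms(1,4) by blast
  show ?thesis
    using upper lower unfolding delone_measure_def by blast
qed

end
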